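(* Let $K_E$ be a partial $E$-field with $K$ algebraically closed, and let $\sigma:K\to K$ be a field automorphism of order two, $R=K^\sigma$, $i\in K$ with $i^2=-1$, and $\mathbb{S}^1=\{z\in K^\times: z\sigma(z)=1\}$. Then $\sigma\circ E=E\circ\sigma$ (as partial functions) if and only if the following three conditions hold: (1) $\sigma(\mathrm{dom}(E))=\mathrm{dom}(E)$; (2) $E(R\cap\mathrm{dom}(E))\subseteq R_{>0}$; (3) $E(iR\cap\mathrm{dom}(E))\subseteq\mathbb{S}^1$.
   Context: A partial $E$-field $K_E$ consists of a field $K$ of characteristic $0$, a $\mathbb{Q}$-vector subspace $\mathrm{dom}(E)\subseteq K$ and a group homomorphism $E:(\mathrm{dom}(E),+)\to(K^\times,\cdot)$. Since $K$ is algebraically closed of characteristic $0$ and $\sigma$ has order two, $R=K^\sigma$ is a real closed field, ordered with positive cone $R_{>0}$. *)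

theory Defs
  imports "HOL-Computational_Algebra.Polynomial"
begin

definition alg_closed :: "'a::field itself \<Rightarrow> bool" where
  "alg_closed _ \<longleftrightarrow> (\<forall>p::'a poly. degree p > 0 \<longrightarrow> (\<exists>x. poly p x = 0))"

definition partial_E_field :: "'a::field_char_0 set \<Rightarrow> ('a \<Rightarrow> 'a) \<Rightarrow> bool" where
  "partial_E_field D E \<longleftrightarrow>
     0 \<in> D \<and> (\<forall>x\<in>D. \<forall>y\<in>D. x + y \<in> D) \<and> (\<forall>q::rat. \<forall>x\<in>D. of_rat q * x \<in> D) \<and>
     (\<forall>x\<in>D. E x \<noteq> 0) \<and> (\<forall>x\<in>D. \<forall>y\<in>D. E (x + y) = E x * E y)"

definition field_aut_order2 :: "('a::field \<Rightarrow> 'a) \<Rightarrow> bool" where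
  "field_aut_order2 \<sigma> \<longleftrightarrow>
     (\<forall>x y. \<sigma> (x + y) = \<sigma> x + \<sigma> y) \<and> (\<forall>x y. \<sigma> (x * y) = \<sigma> x * \<sigma> y) \<and> \<sigma> 1 = 1 \<and>
     bij \<sigma> \<and> \<sigma> \<circ> \<sigma> = id \<and> \<sigma> \<noteq> id"

definition fixed_field :: "('a \<Rightarrow> 'a) \<Rightarrow> 'a set" where
  "fixed_field \<sigma> = {x. \<sigma> x = x}"

text \<open>Positive cone of the (real closed) field R: the nonzero squares of elements of R.\<close>
definition pos_cone :: "'a::field set \<Rightarrow> 'a set" where
  "pos_cone R = {x \<in> R. x \<noteq> 0 \<and> (\<exists>y\<in>R. x = y * y)}"

definition unit_circle :: "('a::field \<Rightarrow> 'a) \<Rightarrow> 'a set" where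
  "unit_circle \<sigma> = {z. z \<noteq> 0 \<and> z * \<sigma> z = 1}"

text \<open>sigma o E = E o sigma as partial functions: equal domains and equal values.\<close>
definition commutes_partial :: "('a \<Rightarrow> 'a) \<Rightarrow> 'a set \<Rightarrow> ('a \<Rightarrow> 'a) \<Rightarrow> bool" where
  "commutes_partial \<sigma> D E \<longleftrightarrow> {x. \<sigma> x \<in> D} = D \<and> (\<forall>x\<in>D. \<sigma> (E x) = E (\<sigma> x))"

end

theory Submission
  imports Defs
begin

text \<open>
  Every x decomposes as x = a + b with a = (x + \<sigma> x)/2 fixed by \<sigma> and b = (x - \<sigma> x)/2
  negated by \<sigma>; since \<sigma> i = -i (as \<sigma> is not the identity on an algebraically closed
  field), the anti-fixed elements are exactly i R. Hence \<sigma> \<circ> E = E \<circ> \<sigma> holds on all of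
  dom(E) iff it holds on R \<inter> dom(E) and on iR \<inter> dom(E). On R it says that E takes
  \<sigma>-fixed values, which are then automatically squares E(x/2)^2 of fixed elements; on iR it
  says \<sigma>(E b) = E(-b) = (E b)\<inverse>, i.e. E b lies on the unit circle.
\<close>

locale field_involution =
  fixes \<sigma> :: "'a::field_char_0 \<Rightarrow> 'a"
  assumes aut_order2: "field_aut_order2 \<sigma>"
begin

lemma conj_add [simp]: "\<sigma> (x + y) = \<sigma> x + \<sigma> y"
  and conj_mult [simp]: "\<sigma> (x * y) = \<sigma> x * \<sigma> y"
  and conj_one [simp]: "\<sigma> 1 = 1"
  and involutive [simp]: "\<sigma> (\<sigma> x) = x"
  and not_id: "\<sigma> \<noteq> id"
  using aut_order2 by (auto simp: field_aut_order2_def fun_eq_iff)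

lemma conj_zero [simp]: "\<sigma> 0 = 0"
  using conj_add[of 0 0] by (metis add_cancel_right_right)

lemma conj_uminus [simp]: "\<sigma> (- x) = - \<sigma> x"
  using conj_add[of x "- x"] by (simp add: add_eq_0_iff2)

lemma conj_diff [simp]: "\<sigma> (x - y) = \<sigma> x - \<sigma> y"
  using conj_add[of x "- y"] by simp

lemma conj_numeral [simp]: "\<sigma> (numeral n) = numeral n"
  by (induction n) (simp_all only: numeral.simps conj_add conj_one)

lemma conj_inverse [simp]: "\<sigma> (inverse x) = inverse (\<sigma> x)"
proof (cases "x = 0")
  case False
  then have "\<sigma> x * \<sigma> (inverse x) = 1"
    using conj_mult[of x "inverse x"] by simp
  then show ?thesis
    by (metis inverse_unique)
qed simp

lemma conj_divide [simp]: "\<sigma> (x / y) = \<sigma> x / \<sigma> y"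
  by (simp add: divide_inverse)

lemma image_eq_preimage: "\<sigma> ` D = {x. \<sigma> x \<in> D}"
proof (intro set_eqI iffI)
  show "x \<in> \<sigma> ` D" if "x \<in> {x. \<sigma> x \<in> D}" for x
    using that image_eqI[of x \<sigma> "\<sigma> x"] by simp
qed auto

lemma conj_sqrt_minus_one:
  assumes "alg_closed TYPE('a)" and i: "i * i = -1"
  shows "\<sigma> i = - i"
proof (rule ccontr)
  assume "\<sigma> i \<noteq> - i"
  moreover have "(\<sigma> i - i) * (\<sigma> i + i) = 0"
    using conj_mult[of i i] i by (simp add: algebra_simps)
  ultimately have fix_i: "\<sigma> i = i"
    by (auto simp: eq_neg_iff_add_eq_0)
  obtain a where "\<sigma> a \<noteq> a"
    using not_id by (auto simp: fun_eq_iff)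
  define b where "b = a - \<sigma> a"
  have "b \<noteq> 0" and conj_b: "\<sigma> b = - b"
    using \<open>\<sigma> a \<noteq> a\<close> by (auto simp: b_def)
  obtain c where "poly [:-b, 0, 1:] c = 0"
    using assms(1) unfolding alg_closed_def
    by (metis degree_pCons_eq_if one_neq_zero pCons_eq_0_iff zero_less_Suc)
  then have c: "c * c = b"
    by (simp add: algebra_simps)
  \<comment> \<open>\<sigma> c squares to -b = (i c)^2, so \<sigma> c = \<plusminus>i c, whence c = \<sigma> (\<sigma> c) = i (i c) = -c.\<close>
  have "(\<sigma> c - i * c) * (\<sigma> c + i * c) = 0"
    using conj_mult[of c c] c conj_b i by (simp add: algebra_simps)
  then have "\<sigma> c = i * c \<or> \<sigma> c = - (i * c)"
    by (auto simp: eq_neg_iff_add_eq_0)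
  then have "\<sigma> (\<sigma> c) = i * (i * c)"
    by (elim disjE) (simp_all only: fix_i conj_mult conj_uminus mult_minus_right minus_minus)
  then have "c = - c"
    using i by (simp add: mult.assoc[symmetric])
  then show False
    using c \<open>b \<noteq> 0\<close> by simp
qed

lemma fixed_half_trace: "(x + \<sigma> x) / 2 \<in> fixed_field \<sigma>"
  by (simp add: fixed_field_def add.commute)

lemma conj_half_diff: "\<sigma> ((x - \<sigma> x) / 2) = - ((x - \<sigma> x) / 2)"
  by (simp add: field_simps)

lemma anti_fixed_in_i_fixed_field:
  assumes "i * i = -1" and "\<sigma> i = - i" and "\<sigma> b = - b"
  shows "b \<in> (\<lambda>r. i * r) ` fixed_field \<sigma>"
proof
  have "i \<noteq> 0"
    using assms(1) by auto
  then show "b = i * (b / i)"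
    by simp
  show "b / i \<in> fixed_field \<sigma>"
    using assms(2,3) by (simp add: fixed_field_def)
qed

end

context
  fixes D :: "'a::field_char_0 set" and E :: "'a \<Rightarrow> 'a"
  assumes E_field: "partial_E_field D E"
begin

lemma dom_zero: "0 \<in> D"
  and dom_add: "x \<in> D \<Longrightarrow> y \<in> D \<Longrightarrow> x + y \<in> D"
  and dom_of_rat_mult: "x \<in> D \<Longrightarrow> of_rat q * x \<in> D"
  and E_nonzero: "x \<in> D \<Longrightarrow> E x \<noteq> 0"
  and E_add: "x \<in> D \<Longrightarrow> y \<in> D \<Longrightarrow> E (x + y) = E x * E y"
  using E_field by (simp_all add: partial_E_field_def)

lemma dom_uminus: "x \<in> D \<Longrightarrow> - x \<in> D"
  using dom_of_rat_mult[of x "-1"] by simp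

lemma dom_half: "x \<in> D \<Longrightarrow> x / 2 \<in> D"
  using dom_of_rat_mult[of x "1/2"] by (simp add: of_rat_divide)

lemma dom_half_sum: "x \<in> D \<Longrightarrow> y \<in> D \<Longrightarrow> (x + y) / 2 \<in> D"
  by (simp add: dom_add dom_half)

lemma dom_half_diff: "x \<in> D \<Longrightarrow> y \<in> D \<Longrightarrow> (x - y) / 2 \<in> D"
  using dom_half_sum[OF _ dom_uminus] by (simp only: diff_conv_add_uminus)

lemma E_zero: "E 0 = 1"
  using E_add[OF dom_zero dom_zero] E_nonzero[OF dom_zero] by simp

lemma E_uminus: "x \<in> D \<Longrightarrow> E x * E (- x) = 1"
  using E_add[OF _ dom_uminus, of x x] E_zero by simp

lemma E_half_square: "x \<in> D \<Longrightarrow> E x = E (x / 2) * E (x / 2)"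
  using E_add[OF dom_half dom_half, of x x] by (simp add: add_divide_distrib[symmetric])

end

context field_involution
begin

lemma commuting_E_fixed_pos_cone:
  assumes E_field: "partial_E_field D E" and commute: "\<forall>x\<in>D. \<sigma> (E x) = E (\<sigma> x)"
  shows "E ` (fixed_field \<sigma> \<inter> D) \<subseteq> pos_cone (fixed_field \<sigma>)"
proof
  fix z assume "z \<in> E ` (fixed_field \<sigma> \<inter> D)"
  then obtain x where x: "\<sigma> x = x" "x \<in> D" and z: "z = E x"
    by (auto simp: fixed_field_def)
  have "x / 2 \<in> D"
    using E_field x(2) by (rule dom_half)
  then have "E (x / 2) \<in> fixed_field \<sigma>"
    using commute x(1) by (simp add: fixed_field_def)
  moreover have "z = E (x / 2) * E (x / 2)" and "z \<noteq> 0" and "\<sigma> z = z"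
    using E_half_square[OF E_field x(2)] E_nonzero[OF E_field x(2)] commute x z by auto
  ultimately show "z \<in> pos_cone (fixed_field \<sigma>)"
    by (auto simp: pos_cone_def fixed_field_def)
qed

lemma commuting_E_unit_circle:
  assumes E_field: "partial_E_field D E" and commute: "\<forall>x\<in>D. \<sigma> (E x) = E (\<sigma> x)"
    and conj_i: "\<sigma> i = - i"
  shows "E ` ((\<lambda>r. i * r) ` fixed_field \<sigma> \<inter> D) \<subseteq> unit_circle \<sigma>"
proof
  fix z assume "z \<in> E ` ((\<lambda>r. i * r) ` fixed_field \<sigma> \<inter> D)"
  then obtain r where "\<sigma> r = r" and ir: "i * r \<in> D" and z: "z = E (i * r)"
    by (auto simp: fixed_field_def)
  then have "\<sigma> z = E (- (i * r))"
    using commute conj_i by simp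
  then have "z * \<sigma> z = 1"
    using E_uminus[OF E_field ir] z by simp
  then show "z \<in> unit_circle \<sigma>"
    by (auto simp: unit_circle_def)
qed

lemma commutes_partial_if_fixed_and_i_fixed:
  assumes E_field: "partial_E_field D E"
    and i: "i * i = -1" and conj_i: "\<sigma> i = - i"
    and invariant: "\<sigma> ` D = D"
    and pos: "E ` (fixed_field \<sigma> \<inter> D) \<subseteq> pos_cone (fixed_field \<sigma>)"
    and circle: "E ` ((\<lambda>r. i * r) ` fixed_field \<sigma> \<inter> D) \<subseteq> unit_circle \<sigma>"
  shows "commutes_partial \<sigma> D E"
  unfolding commutes_partial_def
proof (intro conjI ballI)
  show preimage: "{x. \<sigma> x \<in> D} = D"
    using invariant image_eq_preimage by simp
  fix x assume x: "x \<in> D"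
  then have "\<sigma> x \<in> D"
    using preimage by blast
  define a where "a = (x + \<sigma> x) / 2"
  define b where "b = (x - \<sigma> x) / 2"
  have a: "a \<in> D" and b: "b \<in> D"
    using dom_half_sum[OF E_field x \<open>\<sigma> x \<in> D\<close>] dom_half_diff[OF E_field x \<open>\<sigma> x \<in> D\<close>]
    by (simp_all add: a_def b_def)
  have "x = a + b" and conj_x: "\<sigma> x = a + - b"
    by (simp_all add: a_def b_def field_simps)
  have "E a \<in> fixed_field \<sigma>"
    using pos a fixed_half_trace[of x] by (auto simp: a_def pos_cone_def)
  then have conj_Ea: "\<sigma> (E a) = E a"
    by (simp add: fixed_field_def)
  have "b \<in> (\<lambda>r. i * r) ` fixed_field \<sigma>"
    using anti_fixed_in_i_fixed_field[OF i conj_i conj_half_diff] by (simp add: b_def)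
  then have "E b * \<sigma> (E b) = E b * E (- b)"
    using circle b E_uminus[OF E_field b] by (auto simp: unit_circle_def)
  then have conj_Eb: "\<sigma> (E b) = E (- b)"
    using E_nonzero[OF E_field b] by simp
  have "\<sigma> (E x) = \<sigma> (E a) * \<sigma> (E b)"
    using E_add[OF E_field a b] \<open>x = a + b\<close> by simp
  also have "\<dots> = E (\<sigma> x)"
    using E_add[OF E_field a dom_uminus[OF E_field b]] conj_x conj_Ea conj_Eb by simp
  finally show "\<sigma> (E x) = E (\<sigma> x)" .
qed

end

theorem proposition3p1:
  fixes D :: "'a::field_char_0 set" and E \<sigma> :: "'a \<Rightarrow> 'a" and i :: 'a
  assumes "partial_E_field D E"
    and "alg_closed TYPE('a)"
    and "field_aut_order2 \<sigma>"
    and "i * i = -1"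
  shows "commutes_partial \<sigma> D E \<longleftrightarrow>
           (\<sigma> ` D = D
            \<and> E ` (fixed_field \<sigma> \<inter> D) \<subseteq> pos_cone (fixed_field \<sigma>)
            \<and> E ` ((\<lambda>r. i * r) ` fixed_field \<sigma> \<inter> D) \<subseteq> unit_circle \<sigma>)"
proof -
  interpret field_involution \<sigma>
    using assms(3) by unfold_locales
  have conj_i: "\<sigma> i = - i"
    using conj_sqrt_minus_one assms(2,4) .
  show ?thesis
  proof
    assume "commutes_partial \<sigma> D E"
    then have "{x. \<sigma> x \<in> D} = D" and commute: "\<forall>x\<in>D. \<sigma> (E x) = E (\<sigma> x)"
      by (simp_all add: commutes_partial_def)
    then show "\<sigma> ` D = D \<and> E ` (fixed_field \<sigma> \<inter> D) \<subseteq> pos_cone (fixed_field \<sigma>)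
        \<and> E ` ((\<lambda>r. i * r) ` fixed_field \<sigma> \<inter> D) \<subseteq> unit_circle \<sigma>"
      using commuting_E_fixed_pos_cone[OF assms(1) commute]
        commuting_E_unit_circle[OF assms(1) commute conj_i] image_eq_preimage
      by simp
  next
    assume "\<sigma> ` D = D \<and> E ` (fixed_field \<sigma> \<inter> D) \<subseteq> pos_cone (fixed_field \<sigma>)
        \<and> E ` ((\<lambda>r. i * r) ` fixed_field \<sigma> \<inter> D) \<subseteq> unit_circle \<sigma>"
    then show "commutes_partial \<sigma> D E"
      using commutes_partial_if_fixed_and_i_fixed[OF assms(1,4) conj_i] by simp
  qed
qed

end
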